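(* Assume (A1), (C1) and (D4) hold, let $\hat x$ be the point in (D4), and let $\{(x^k,y^k)\}$ be generated by the LSAAL algorithm described in the context. Then there exists $\varepsilon_0>0$ such that for all positive integers $\tilde k\le k-1$, $$\mathbb{E}\big[\langle y^k,G(\hat x,\xi_k)\rangle\,\big|\,\mathcal{F}_{\tilde k}\big]\le-\varepsilon_0\,\mathbb{E}\big[\|y^k\|\,\big|\,\mathcal{F}_{\tilde k}\big].$$
   Context: $\mathcal{Y}$ is a finite-dimensional Hilbert space, $\mathcal{K}\subset\mathcal{Y}$ a closed convex cone, $\mathcal{K}^\circ=\{v:\langle v,w\rangle\le0\ \forall w\in\mathcal{K}\}$ its polar cone, $\Pi_{\mathcal{K}^\circ}$ the metric projection. $X\subset\mathbb{R}^n$ nonempty convex compact, contained in an open convex set $\mathcal{O}$. $\xi$ random vector supported on $\Xi\subseteq\mathbb{R}^q$; $F:\mathcal{O}\times\Xi\to\mathbb{R}$, $G:\mathcal{O}\times\Xi\to\mathcal{Y}$ smooth in $x$ for each $\xi$, with gradient $\nabla_xF$, derivative $\mathrm{D}_xG$; $f(x)=\mathbb{E}[F(x,\xi)]$, $g(x)=\mathbb{E}[G(x,\xi)]$. (A1) Samples $\xi_1,\xi_2,\dots$ are i.i.d. copies of $\xi$. (C1) $\mathbb{E}[\nabla_xF(x,\xi)]=\nabla f(x)$ and $\mathbb{E}[\mathrm{D}_xG(x,\xi)]=\mathrm{D}g(x)$ for $x\in\mathcal{O}$. (D4) (Slater) There is $\hat x\in\mathrm{int}\,X$ with $g(\hat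 x)\in\mathrm{int}\,\mathcal{K}$. LSAAL algorithm: $x^1\in X$, $y^1=0$, $\sigma>0$; for $k\ge1$: $l_f^k(x)=F(x^k,\xi_k)+\langle\nabla_xF(x^k,\xi_k),x-x^k\rangle$, $l_g^k(x)=G(x^k,\xi_k)+\mathrm{D}_xG(x^k,\xi_k)(x-x^k)$, $l_\sigma^k(x,y)=l_f^k(x)+\frac{1}{2\sigma}[\|\Pi_{\mathcal{K}^\circ}(y+\sigma l_g^k(x))\|^2-\|y\|^2]$, $x^{k+1}=\mathrm{argmin}_{x\in X}\{l_\sigma^k(x,y^k)+\frac{1}{2\sigma}\|x-x^k\|^2\}$, $y^{k+1}=\Pi_{\mathcal{K}^\circ}(y^k+\sigma l_g^k(x^{k+1}))$. $\mathcal{F}_k$ denotes the $\sigma$-algebra generated by $\xi_1,\dots,\xi_{k-1}$ ($\mathcal{F}_1$ trivial), so that $(x^k,y^k)$ is $\mathcal{F}_k$-measurable. *)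

theory Defs
  imports "HOL-Analysis.Analysis" "HOL-Probability.Probability"
begin

definition polar_cone :: "'a::real_inner set \<Rightarrow> 'a set" where
  "polar_cone K = {v. \<forall>w\<in>K. inner v w \<le> 0}"

definition proj_polar :: "'a::euclidean_space set \<Rightarrow> 'a \<Rightarrow> 'a" where
  "proj_polar K z = closest_point (polar_cone K) z"

definition sample_filtration ::
  "'w measure \<Rightarrow> (nat \<Rightarrow> 'w \<Rightarrow> 'q::topological_space) \<Rightarrow> nat \<Rightarrow> 'w measure" where
  "sample_filtration M xis k =
     sigma (space M) {xis i -` A \<inter> space M | i A. 1 \<le> i \<and> i < k \<and> A \<in> sets borel}"

definition lin_f ::
  "('x \<Rightarrow> 'q \<Rightarrow> real) \<Rightarrow> ('x \<Rightarrow> 'q \<Rightarrow> 'x::real_inner) \<Rightarrow> 'x \<Rightarrow> 'q \<Rightarrow> 'x \<Rightarrow> real" where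
  "lin_f F gradF xk s z = F xk s + inner (gradF xk s) (z - xk)"

definition lin_g ::
  "('x::real_normed_vector \<Rightarrow> 'q \<Rightarrow> 'y::real_normed_vector) \<Rightarrow> ('x \<Rightarrow> 'q \<Rightarrow> 'x \<Rightarrow>\<^sub>L 'y)
     \<Rightarrow> 'x \<Rightarrow> 'q \<Rightarrow> 'x \<Rightarrow> 'y" where
  "lin_g G DG xk s z = G xk s + blinfun_apply (DG xk s) (z - xk)"

definition lin_auglag ::
  "'y::euclidean_space set \<Rightarrow> real \<Rightarrow> ('x \<Rightarrow> 'q \<Rightarrow> real) \<Rightarrow> ('x \<Rightarrow> 'q \<Rightarrow> 'x::euclidean_space)
     \<Rightarrow> ('x \<Rightarrow> 'q \<Rightarrow> 'y) \<Rightarrow> ('x \<Rightarrow> 'q \<Rightarrow> 'x \<Rightarrow>\<^sub>L 'y) \<Rightarrow> 'x \<Rightarrow> 'q \<Rightarrow> 'x \<Rightarrow> 'y \<Rightarrow> real" where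
  "lin_auglag K \<sigma> F gradF G DG xk s z y =
     lin_f F gradF xk s z
     + (1 / (2 * \<sigma>)) * ((norm (proj_polar K (y + \<sigma> *\<^sub>R lin_g G DG xk s z)))\<^sup>2 - (norm y)\<^sup>2)"

end

theory Submission
  imports Defs
begin

(* Slater's condition puts a ball cball (g xhat) e inside K, so every v in the polar cone
   satisfies <v, g xhat> <= -e |v|; the multipliers y^k (k >= 2) are projections onto the
   polar cone.  Since y^k is F_k-measurable and xi_k is independent of F_k, conditioning
   on F_kt (kt < k) allows replacing G(xhat, xi_k) by its mean g(xhat), and the bound
   passes through the monotone, positively homogeneous conditional expectation. *)

lemma closed_polar_cone: "closed (polar_cone K)"
proof -
  have "polar_cone K = (\<Inter>w\<in>K. {v. inner w v \<le> 0})"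
    unfolding polar_cone_def by (auto simp: inner_commute)
  then show ?thesis
    by (simp add: closed_INT closed_halfspace_le)
qed

lemma proj_polar_in_polar_cone: "proj_polar K z \<in> polar_cone K"
proof -
  have "0 \<in> polar_cone K"
    unfolding polar_cone_def by simp
  then show ?thesis
    unfolding proj_polar_def by (intro closest_point_in_set closed_polar_cone) blast
qed

lemma polar_cone_inner_le_neg_norm:
  assumes "c \<in> interior K"
  obtains e :: real where "e > 0" "\<And>v. v \<in> polar_cone K \<Longrightarrow> inner v c \<le> - e * norm v"
proof -
  obtain e where e: "e > 0" "cball c e \<subseteq> K"
    using assms mem_interior_cball by blast
  have "inner v c \<le> - e * norm v" if v: "v \<in> polar_cone K" for v
  proof (cases "v = 0")
    case False
    define z where "z = c + (e / norm v) *\<^sub>R v"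
    have "z \<in> K"
      using e False by (intro subsetD[OF e(2)]) (simp add: z_def dist_norm)
    then have "inner v z \<le> 0"
      using v unfolding polar_cone_def by blast
    moreover have "inner v z = inner v c + e * norm v"
      using False by (simp add: z_def inner_add_right power2_norm_eq_inner[symmetric] power2_eq_square)
    ultimately show ?thesis by simp
  qed simp
  with e(1) show ?thesis by (rule that)
qed

definition sample_events :: "'w measure \<Rightarrow> (nat \<Rightarrow> 'w \<Rightarrow> 'q::topological_space) \<Rightarrow> nat \<Rightarrow> 'w set set" where
  "sample_events M xis i = {xis i -` A \<inter> space M | A. A \<in> sets borel}"

lemma Int_stable_sample_events: "Int_stable (sample_events M xis i)"
proof (rule Int_stableI)
  fix a b
  assume "a \<in> sample_events M xis i" "b \<in> sample_events M xis i"
  then obtain A B where "a = xis i -` A \<inter> space M" "b = xis i -` B \<inter> space M"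
    and "A \<in> sets borel" "B \<in> sets borel"
    unfolding sample_events_def by blast
  then show "a \<inter> b \<in> sample_events M xis i"
    unfolding sample_events_def by (intro CollectI exI[of _ "A \<inter> B"]) auto
qed

lemma space_sample_filtration [simp]: "space (sample_filtration M xis k) = space M"
  unfolding sample_filtration_def by (simp add: space_measure_of_conv)

lemma sets_sample_filtration:
  "sets (sample_filtration M xis k) = sigma_sets (space M) (\<Union>i\<in>{1..<k}. sample_events M xis i)"
proof -
  have generators: "{xis i -` A \<inter> space M | i A. 1 \<le> i \<and> i < k \<and> A \<in> sets borel}
      = (\<Union>i\<in>{1..<k}. sample_events M xis i)"
    unfolding sample_events_def by (auto simp: Bex_def) blast+
  show ?thesis
    unfolding sample_filtration_def generators
    by (rule sets_measure_of) (auto simp: sample_events_def)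
qed

lemma sample_filtration_mono:
  "kt \<le> k \<Longrightarrow> sets (sample_filtration M xis kt) \<subseteq> sets (sample_filtration M xis k)"
  unfolding sets_sample_filtration by (rule sigma_sets_mono') (auto simp: Bex_def; fastforce)

lemma subalgebra_sample_filtration:
  assumes "\<And>i. 1 \<le> i \<Longrightarrow> xis i \<in> borel_measurable M"
  shows "subalgebra M (sample_filtration M xis k)"
  unfolding subalgebra_def space_sample_filtration sets_sample_filtration
  using assms by (auto simp: sample_events_def intro!: sets.sigma_sets_subset measurable_sets)

lemma (in prob_space) sigma_finite_subalgebra_sample_filtration:
  assumes "\<And>i. 1 \<le> i \<Longrightarrow> xis i \<in> borel_measurable M"
  shows "sigma_finite_subalgebra M (sample_filtration M xis k)"
proof -
  interpret finite_measure_subalgebra M "sample_filtration M xis k"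
    by unfold_locales (rule subalgebra_sample_filtration[OF assms])
  show ?thesis by unfold_locales
qed

lemma (in prob_space) indep_var_sample_filtration:
  fixes xis :: "nat \<Rightarrow> 'a \<Rightarrow> 'q::topological_space" and h :: "'a \<Rightarrow> 'b::topological_space"
  assumes rv: "\<And>i. 1 \<le> i \<Longrightarrow> xis i \<in> borel_measurable M"
    and indep: "indep_vars (\<lambda>_. borel) xis {1..}"
    and k: "1 \<le> k"
    and h: "h \<in> borel_measurable (sample_filtration M xis k)"
    and \<phi>: "\<phi> \<in> borel_measurable borel"
  shows "indep_var borel h borel (\<lambda>\<omega>. \<phi> (xis k \<omega>))"
proof -
  define I where "I = (\<lambda>past::bool. if past then {1..<k} else {k})"
  have "indep_sets (sample_events M xis) {1..}"
    using indep unfolding indep_vars_def2 sample_events_def by simp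
  then have "indep_sets (sample_events M xis) (\<Union>past. I past)"
    by (rule indep_sets_mono_index[rotated]) (use k in \<open>auto simp: I_def\<close>)
  then have indep_blocks:
    "indep_sets (\<lambda>past. sigma_sets (space M) (\<Union>i\<in>I past. sample_events M xis i)) UNIV"
  proof (rule indep_sets_collect_sigma)
    show "Int_stable (sample_events M xis i)" for i
      by (rule Int_stable_sample_events)
    show "disjoint_family_on I UNIV"
      unfolding disjoint_family_on_def I_def by auto
  qed
  have "h \<in> borel_measurable M"
    using measurable_from_subalg[OF subalgebra_sample_filtration[OF rv] h] .
  moreover have "(\<lambda>\<omega>. \<phi> (xis k \<omega>)) \<in> borel_measurable M"
    using rv[OF k] \<phi> by measurable
  ultimately show ?thesis
    unfolding indep_var_def indep_vars_def2
  proof (intro conjI ballI indep_sets_mono_sets[OF indep_blocks])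
    fix past :: bool
    show "{case_bool h (\<lambda>\<omega>. \<phi> (xis k \<omega>)) past -` A \<inter> space M |A. A \<in> sets (case_bool borel borel past)}
        \<subseteq> sigma_sets (space M) (\<Union>i\<in>I past. sample_events M xis i)"
    proof (cases past)
      case True
      then show ?thesis
        using measurable_sets[OF h] by (auto simp: I_def sets_sample_filtration)
    next
      case False
      have "(\<lambda>\<omega>. \<phi> (xis k \<omega>)) -` A \<inter> space M \<in> sample_events M xis k" if "A \<in> sets borel" for A
        using measurable_sets[OF \<phi> that] unfolding sample_events_def by (auto intro!: exI[of _ "\<phi> -` A"])
      with False show ?thesis
        by (auto simp: I_def)
    qed
  qed (auto split: bool.split)
qed

lemma
  fixes H :: "'q::topological_space \<Rightarrow> 'b::{banach, second_countable_topology}"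
  assumes X: "X \<in> borel_measurable M" and law: "distr M borel X = P" and H: "integrable P H"
  shows integrable_comp_law: "integrable M (\<lambda>\<omega>. H (X \<omega>))"
    and integral_comp_law: "(\<integral>\<omega>. H (X \<omega>) \<partial>M) = (\<integral>s. H s \<partial>P)"
proof -
  have H_borel: "H \<in> borel_measurable borel"
    using borel_measurable_integrable[OF H] unfolding law[symmetric] by simp
  show "integrable M (\<lambda>\<omega>. H (X \<omega>))"
    using H X H_borel unfolding law[symmetric] by (simp add: integrable_distr_eq)
  show "(\<integral>\<omega>. H (X \<omega>) \<partial>M) = (\<integral>s. H s \<partial>P)"
    using X H_borel unfolding law[symmetric] by (simp add: integral_distr)
qed

lemma (in prob_space)
  fixes X Y :: "'a \<Rightarrow> 'b::euclidean_space"
  assumes indep: "indep_var borel X borel Y" and X: "integrable M X" and Y: "integrable M Y"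
  shows indep_var_integrable_inner: "integrable M (\<lambda>\<omega>. X \<omega> \<bullet> Y \<omega>)"
    and indep_var_integral_inner: "(\<integral>\<omega>. X \<omega> \<bullet> Y \<omega> \<partial>M) = (\<integral>\<omega>. X \<omega> \<partial>M) \<bullet> (\<integral>\<omega>. Y \<omega> \<partial>M)"
proof -
  have coords_indep: "indep_var borel (\<lambda>\<omega>. X \<omega> \<bullet> b) borel (\<lambda>\<omega>. Y \<omega> \<bullet> b)" for b :: 'b
    using indep_var_compose[OF indep, of "\<lambda>x. x \<bullet> b" borel "\<lambda>x. x \<bullet> b" borel]
    by (simp add: comp_def)
  have coords_integrable: "integrable M (\<lambda>\<omega>. X \<omega> \<bullet> b)" "integrable M (\<lambda>\<omega>. Y \<omega> \<bullet> b)" for b :: 'b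
    using X Y by simp_all
  have expand: "(\<lambda>\<omega>. X \<omega> \<bullet> Y \<omega>) = (\<lambda>\<omega>. \<Sum>b\<in>Basis. (X \<omega> \<bullet> b) * (Y \<omega> \<bullet> b))"
    by (rule ext, rule euclidean_inner)
  show "integrable M (\<lambda>\<omega>. X \<omega> \<bullet> Y \<omega>)"
    unfolding expand
    by (rule Bochner_Integration.integrable_sum, intro indep_var_integrable coords_indep coords_integrable)
  have "(\<integral>\<omega>. X \<omega> \<bullet> Y \<omega> \<partial>M) = (\<Sum>b\<in>Basis. \<integral>\<omega>. (X \<omega> \<bullet> b) * (Y \<omega> \<bullet> b) \<partial>M)"
    unfolding expand
    by (rule Bochner_Integration.integral_sum, intro indep_var_integrable coords_indep coords_integrable)
  also have "\<dots> = (\<Sum>b\<in>Basis. (\<integral>\<omega>. X \<omega> \<bullet> b \<partial>M) * (\<integral>\<omega>. Y \<omega> \<bullet> b \<partial>M))"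
    by (intro sum.cong refl indep_var_lebesgue_integral coords_indep coords_integrable)
  also have "\<dots> = (\<Sum>b\<in>Basis. ((\<integral>\<omega>. X \<omega> \<partial>M) \<bullet> b) * ((\<integral>\<omega>. Y \<omega> \<partial>M) \<bullet> b))"
    using X Y by simp
  also have "\<dots> = (\<integral>\<omega>. X \<omega> \<partial>M) \<bullet> (\<integral>\<omega>. Y \<omega> \<partial>M)"
    by (rule euclidean_inner[symmetric])
  finally show "(\<integral>\<omega>. X \<omega> \<bullet> Y \<omega> \<partial>M) = (\<integral>\<omega>. X \<omega> \<partial>M) \<bullet> (\<integral>\<omega>. Y \<omega> \<partial>M)" .
qed

lemma (in prob_space) real_cond_exp_inner_indep:
  fixes Y Z :: "'a \<Rightarrow> 'b::euclidean_space"
  assumes F: "sigma_finite_subalgebra M F" and N: "subalgebra M N" and FN: "sets F \<subseteq> sets N"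
    and Y: "Y \<in> borel_measurable N" "integrable M Y" and Z: "integrable M Z"
    and indep: "\<And>h :: 'a \<Rightarrow> 'b. h \<in> borel_measurable N \<Longrightarrow> indep_var borel h borel Z"
  shows "AE \<omega> in M. real_cond_exp M F (\<lambda>\<omega>. Y \<omega> \<bullet> Z \<omega>) \<omega>
                   = real_cond_exp M F (\<lambda>\<omega>. Y \<omega> \<bullet> expectation Z) \<omega>"
proof -
  interpret F: sigma_finite_subalgebra M F by (rule F)
  have set_integral_eq: "(\<integral>\<omega>\<in>A. Y \<omega> \<bullet> Z \<omega> \<partial>M) = (\<integral>\<omega>\<in>A. Y \<omega> \<bullet> expectation Z \<partial>M)"
    if A: "A \<in> sets N" for A
  proof -
    have "A \<in> sets M"
      using N A unfolding subalgebra_def by blast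
    define h where "h = (\<lambda>\<omega>. indicator A \<omega> *\<^sub>R Y \<omega>)"
    have h_meas: "h \<in> borel_measurable N"
      unfolding h_def using A Y(1) by measurable
    have h_int: "integrable M h"
      unfolding h_def using \<open>A \<in> sets M\<close> Y(2) by (rule integrable_mult_indicator)
    have "(\<integral>\<omega>\<in>A. Y \<omega> \<bullet> Z \<omega> \<partial>M) = (\<integral>\<omega>. h \<omega> \<bullet> Z \<omega> \<partial>M)"
      unfolding set_lebesgue_integral_def h_def by simp
    also have "\<dots> = expectation h \<bullet> expectation Z"
      by (rule indep_var_integral_inner[OF indep[OF h_meas] h_int Z])
    also have "\<dots> = (\<integral>\<omega>. h \<omega> \<bullet> expectation Z \<partial>M)"
      using h_int by simp
    also have "\<dots> = (\<integral>\<omega>\<in>A. Y \<omega> \<bullet> expectation Z \<partial>M)"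
      unfolding set_lebesgue_integral_def h_def by simp
    finally show ?thesis .
  qed
  have YZ_int: "integrable M (\<lambda>\<omega>. Y \<omega> \<bullet> Z \<omega>)"
    by (rule indep_var_integrable_inner[OF indep[OF Y(1)] Y(2) Z])
  have YEZ_int: "integrable M (\<lambda>\<omega>. Y \<omega> \<bullet> expectation Z)"
    using Y(2) by simp
  show ?thesis
  proof (rule F.real_cond_exp_charact)
    fix A
    assume "A \<in> sets F"
    with FN have "(\<integral>\<omega>\<in>A. Y \<omega> \<bullet> Z \<omega> \<partial>M) = (\<integral>\<omega>\<in>A. Y \<omega> \<bullet> expectation Z \<partial>M)"
      by (intro set_integral_eq) blast
    also have "\<dots> = (\<integral>\<omega>\<in>A. real_cond_exp M F (\<lambda>\<omega>. Y \<omega> \<bullet> expectation Z) \<omega> \<partial>M)"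
      by (rule F.real_cond_exp_intA[OF YEZ_int \<open>A \<in> sets F\<close>])
    finally show "(\<integral>\<omega>\<in>A. Y \<omega> \<bullet> Z \<omega> \<partial>M)
        = (\<integral>\<omega>\<in>A. real_cond_exp M F (\<lambda>\<omega>. Y \<omega> \<bullet> expectation Z) \<omega> \<partial>M)" .
  qed (use YZ_int F.real_cond_exp_int(1)[OF YEZ_int] in auto)
qed

lemma (in prob_space) real_cond_exp_inner_indep_le_neg_norm:
  fixes Y Z :: "'a \<Rightarrow> 'b::euclidean_space"
  assumes F: "sigma_finite_subalgebra M F" and N: "subalgebra M N" and FN: "sets F \<subseteq> sets N"
    and Y: "Y \<in> borel_measurable N" "integrable M Y" and Z: "integrable M Z"
    and indep: "\<And>h :: 'a \<Rightarrow> 'b. h \<in> borel_measurable N \<Longrightarrow> indep_var borel h borel Z"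
    and bound: "AE \<omega> in M. Y \<omega> \<bullet> expectation Z \<le> - e * norm (Y \<omega>)"
  shows "AE \<omega> in M. real_cond_exp M F (\<lambda>\<omega>. Y \<omega> \<bullet> Z \<omega>) \<omega>
                   \<le> - e * real_cond_exp M F (\<lambda>\<omega>. norm (Y \<omega>)) \<omega>"
proof -
  interpret F: sigma_finite_subalgebra M F by (rule F)
  have norm_Y: "integrable M (\<lambda>\<omega>. norm (Y \<omega>))"
    using Y(2) by simp
  have "AE \<omega> in M. real_cond_exp M F (\<lambda>\<omega>. Y \<omega> \<bullet> Z \<omega>) \<omega>
      = real_cond_exp M F (\<lambda>\<omega>. Y \<omega> \<bullet> expectation Z) \<omega>"
    by (rule real_cond_exp_inner_indep[OF F N FN Y Z indep])
  moreover have "AE \<omega> in M. real_cond_exp M F (\<lambda>\<omega>. Y \<omega> \<bullet> expectation Z) \<omega>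
      \<le> real_cond_exp M F (\<lambda>\<omega>. - e * norm (Y \<omega>)) \<omega>"
    using bound Y(2) norm_Y by (intro F.real_cond_exp_mono) auto
  moreover have "AE \<omega> in M. real_cond_exp M F (\<lambda>\<omega>. - e * norm (Y \<omega>)) \<omega>
      = - e * real_cond_exp M F (\<lambda>\<omega>. norm (Y \<omega>)) \<omega>"
    by (rule F.real_cond_exp_cmult[OF norm_Y])
  ultimately show ?thesis
    by eventually_elim simp
qed

theorem lemma3p3:
  fixes M :: "'w measure"
    and P :: "'q::euclidean_space measure"
    and \<Xi> :: "'q set"
    and xis :: "nat \<Rightarrow> 'w \<Rightarrow> 'q"
    and K :: "'y::euclidean_space set"
    and X U :: "'x::euclidean_space set"
    and F :: "'x \<Rightarrow> 'q \<Rightarrow> real" and gradF :: "'x \<Rightarrow> 'q \<Rightarrow> 'x"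
    and G :: "'x \<Rightarrow> 'q \<Rightarrow> 'y" and DG :: "'x \<Rightarrow> 'q \<Rightarrow> 'x \<Rightarrow>\<^sub>L 'y"
    and f :: "'x \<Rightarrow> real" and g :: "'x \<Rightarrow> 'y"
    and \<sigma> :: real and x1 xhat :: 'x
    and x :: "nat \<Rightarrow> 'w \<Rightarrow> 'x" and y :: "nat \<Rightarrow> 'w \<Rightarrow> 'y"
  assumes M: "prob_space M"
    and P: "prob_space P" and P_borel: "sets P = sets borel"
    and Xi: "\<Xi> \<in> sets P" "AE s in P. s \<in> \<Xi>"
    \<comment> \<open>(A1): xi_1, xi_2, ... are i.i.d. copies of xi (whose law is P)\<close>
    and xis_rv: "\<And>k. 1 \<le> k \<Longrightarrow> xis k \<in> borel_measurable M"
    and xis_law: "\<And>k. 1 \<le> k \<Longrightarrow> distr M borel (xis k) = P"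
    and xis_indep: "prob_space.indep_vars M (\<lambda>_. borel) xis {1..}"
    \<comment> \<open>cone and feasible set\<close>
    and K: "closed K" "convex K" "cone K" "K \<noteq> {}"
    and X: "X \<noteq> {}" "convex X" "compact X" "X \<subseteq> U"
    and U: "open U" "convex U"
    \<comment> \<open>smoothness in x (continuously differentiable) for each sample value\<close>
    and F_deriv: "\<And>s z. s \<in> \<Xi> \<Longrightarrow> z \<in> U \<Longrightarrow>
        ((\<lambda>u. F u s) has_derivative (\<lambda>h. inner (gradF z s) h)) (at z)"
    and G_deriv: "\<And>s z. s \<in> \<Xi> \<Longrightarrow> z \<in> U \<Longrightarrow>
        ((\<lambda>u. G u s) has_derivative blinfun_apply (DG z s)) (at z)"
    and gradF_cont: "\<And>s. s \<in> \<Xi> \<Longrightarrow> continuous_on U (\<lambda>u. gradF u s)"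
    and DG_cont: "\<And>s. s \<in> \<Xi> \<Longrightarrow> continuous_on U (\<lambda>u. DG u s)"
    \<comment> \<open>f and g are the expectations\<close>
    and F_int: "\<And>z. z \<in> U \<Longrightarrow> integrable P (\<lambda>s. F z s)"
    and G_int: "\<And>z. z \<in> U \<Longrightarrow> integrable P (\<lambda>s. G z s)"
    and f_def: "\<And>z. z \<in> U \<Longrightarrow> f z = (\<integral>s. F z s \<partial>P)"
    and g_def: "\<And>z. z \<in> U \<Longrightarrow> g z = (\<integral>s. G z s \<partial>P)"
    \<comment> \<open>(C1): unbiased gradient / derivative estimates\<close>
    and C1_F: "\<And>z. z \<in> U \<Longrightarrow> integrable P (\<lambda>s. gradF z s) \<and>
        (f has_derivative (\<lambda>h. inner (\<integral>s. gradF z s \<partial>P) h)) (at z)"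
    and C1_G: "\<And>z. z \<in> U \<Longrightarrow> (\<forall>h. integrable P (\<lambda>s. blinfun_apply (DG z s) h)) \<and>
        (g has_derivative (\<lambda>h. \<integral>s. blinfun_apply (DG z s) h \<partial>P)) (at z)"
    \<comment> \<open>(D4): Slater point\<close>
    and D4: "xhat \<in> interior X" "g xhat \<in> interior K"
    \<comment> \<open>LSAAL iterates\<close>
    and sigma_pos: "\<sigma> > 0"
    and x1: "x1 \<in> X" "\<And>\<omega>. \<omega> \<in> space M \<Longrightarrow> x 1 \<omega> = x1"
    and y1: "\<And>\<omega>. \<omega> \<in> space M \<Longrightarrow> y 1 \<omega> = 0"
    and x_step: "\<And>k \<omega>. 1 \<le> k \<Longrightarrow> \<omega> \<in> space M \<Longrightarrow>
        x (Suc k) \<omega> \<in> X \<and>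
        (\<forall>z\<in>X. lin_auglag K \<sigma> F gradF G DG (x k \<omega>) (xis k \<omega>) (x (Suc k) \<omega>) (y k \<omega>)
                   + (1 / (2 * \<sigma>)) * (norm (x (Suc k) \<omega> - x k \<omega>))\<^sup>2
               \<le> lin_auglag K \<sigma> F gradF G DG (x k \<omega>) (xis k \<omega>) z (y k \<omega>)
                   + (1 / (2 * \<sigma>)) * (norm (z - x k \<omega>))\<^sup>2)"
    and y_step: "\<And>k \<omega>. 1 \<le> k \<Longrightarrow> \<omega> \<in> space M \<Longrightarrow>
        y (Suc k) \<omega> = proj_polar K (y k \<omega> + \<sigma> *\<^sub>R lin_g G DG (x k \<omega>) (xis k \<omega>) (x (Suc k) \<omega>))"
    \<comment> \<open>(x^k, y^k) is F_k-measurable; the conditional expectations in the claim exist\<close>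
    and x_meas: "\<And>k. 1 \<le> k \<Longrightarrow> x k \<in> borel_measurable (sample_filtration M xis k)"
    and y_meas: "\<And>k. 1 \<le> k \<Longrightarrow> y k \<in> borel_measurable (sample_filtration M xis k)"
    and y_int: "\<And>k. 1 \<le> k \<Longrightarrow> integrable M (\<lambda>\<omega>. norm (y k \<omega>))"
  shows "\<exists>\<epsilon>0>0. \<forall>k kt. 1 \<le> kt \<and> kt \<le> k - 1 \<longrightarrow>
           (AE \<omega> in M.
              real_cond_exp M (sample_filtration M xis kt) (\<lambda>\<omega>. inner (y k \<omega>) (G xhat (xis k \<omega>))) \<omega>
              \<le> - \<epsilon>0 * real_cond_exp M (sample_filtration M xis kt) (\<lambda>\<omega>. norm (y k \<omega>)) \<omega>)"
proof -
  interpret prob_space M by (rule M)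
  obtain e where "e > 0"
    and slater: "\<And>v. v \<in> polar_cone K \<Longrightarrow> inner v (g xhat) \<le> - e * norm v"
    using polar_cone_inner_le_neg_norm[OF D4(2)] by blast
  have xhat_U: "xhat \<in> U"
    using D4(1) X(4) interior_subset by blast
  have G_borel: "G xhat \<in> borel_measurable borel"
    using borel_measurable_integrable[OF G_int[OF xhat_U]] P_borel
    by (simp cong: measurable_cong_sets)
  show ?thesis
  proof (intro exI[of _ e] conjI allI impI \<open>e > 0\<close>)
    fix k kt :: nat
    assume "1 \<le> kt \<and> kt \<le> k - 1"
    then have k: "1 \<le> k" "kt \<le> k" "k = Suc (k - 1)" "1 \<le> k - 1"
      by auto
    have y_polar: "y k \<omega> \<in> polar_cone K" if "\<omega> \<in> space M" for \<omega>
      using y_step[OF k(4) that] k(3) proj_polar_in_polar_cone by metis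
    have "y k \<in> borel_measurable M"
      by (rule measurable_from_subalg[OF subalgebra_sample_filtration[OF xis_rv] y_meas[OF k(1)]])
    then have y_integrable: "integrable M (y k)"
      using y_int[OF k(1)] by (simp add: integrable_norm_iff)
    have G_xi_mean: "expectation (\<lambda>\<omega>. G xhat (xis k \<omega>)) = g xhat"
      using integral_comp_law[OF xis_rv[OF k(1)] xis_law[OF k(1)] G_int[OF xhat_U]] g_def[OF xhat_U]
      by simp
    have slater_y: "AE \<omega> in M. y k \<omega> \<bullet> expectation (\<lambda>\<omega>. G xhat (xis k \<omega>)) \<le> - e * norm (y k \<omega>)"
      unfolding G_xi_mean using slater y_polar by blast
    show "AE \<omega> in M.
        real_cond_exp M (sample_filtration M xis kt) (\<lambda>\<omega>. inner (y k \<omega>) (G xhat (xis k \<omega>))) \<omega>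
        \<le> - e * real_cond_exp M (sample_filtration M xis kt) (\<lambda>\<omega>. norm (y k \<omega>)) \<omega>"
      by (rule real_cond_exp_inner_indep_le_neg_norm[OF
          sigma_finite_subalgebra_sample_filtration[OF xis_rv] subalgebra_sample_filtration[OF xis_rv]
          sample_filtration_mono[OF k(2)] y_meas[OF k(1)] y_integrable
          integrable_comp_law[OF xis_rv[OF k(1)] xis_law[OF k(1)] G_int[OF xhat_U]]
          indep_var_sample_filtration[OF xis_rv xis_indep k(1) _ G_borel] slater_y])
  qed
qed

end
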